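(* Let $G$ be a finite group, and let $a_1,a_2,a_3,a_4$ denote independent uniformly random elements of $G$. Then \begin{align*} Pr(a_1a_2a_3a_4=a_2a_1a_4a_3)&=Pr(a_1a_2a_3a_4=a_4a_3a_2a_1)=Pr^4(G)\\ &=\frac{\sum_{x,y\in G}|Stab.Prod_2(x,y)|}{|G|^4}\\ &=\sum_{i,k,j=1}^{c(G)}\frac{|\Omega_j|\cdot c_{i,k;j}(G)^2}{|\Omega_i|\cdot|\Omega_k|\cdot|G|^2}\\ &=\sum_{i,k,j=1}^{c(G)}\frac{|\Omega_j|\cdot c_{i,k;j}(G)\cdot c_{k,i;j}(G)}{|\Omega_i|\cdot|\Omega_k|\cdot|G|^2}. \end{align*}
   Context: $c(G)$ is the number of conjugacy classes of $G$, and $\Omega_1,\dots,\Omega_{c(G)}$ are these classes. $Pr^4(G)$ is the probability that $a_1a_2a_3a_4=a_4a_3a_2a_1$ for independent uniformly random $a_i\in G$. For $g_1,\dots,g_n\in G$, $Stab.Prod_n(g_1,\dots,g_n)$ is the set of all tuples $(b_1,\dots,b_n)\in G^n$ such that $b_1^{-1}g_1b_1\cdot b_2^{-1}g_2b_2\cdots b_n^{-1}g_nb_n=g_1g_2\cdots g_n$. For indices $i_1,\dots,i_n,j$, $c_{i_1,\dots,i_n;j}(G)$ is the number of tuples $(x_1,\dots,x_n)$ with $x_t\in\Omega_{i_t}$ for all $t$ and $x_1x_2\cdots x_n=y$, for a fixed $y\in\Omega_j$. This number does not depend on the choice of $y$. *)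

theory Defs
  imports "HOL-Algebra.Group" Complex_Main
begin

definition conj_class :: "('a, 'b) monoid_scheme \<Rightarrow> 'a \<Rightarrow> 'a set" where
  "conj_class G x = {inv\<^bsub>G\<^esub> g \<otimes>\<^bsub>G\<^esub> x \<otimes>\<^bsub>G\<^esub> g | g. g \<in> carrier G}"

definition conj_classes :: "('a, 'b) monoid_scheme \<Rightarrow> 'a set set" where
  "conj_classes G = conj_class G ` carrier G"

definition prob4 :: "('a, 'b) monoid_scheme \<Rightarrow> ('a \<Rightarrow> 'a \<Rightarrow> 'a \<Rightarrow> 'a \<Rightarrow> bool) \<Rightarrow> real" where
  "prob4 G P = real (card {(a1, a2, a3, a4). a1 \<in> carrier G \<and> a2 \<in> carrier G \<and>
       a3 \<in> carrier G \<and> a4 \<in> carrier G \<and> P a1 a2 a3 a4}) / real (card (carrier G)) ^ 4"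

definition Pr4 :: "('a, 'b) monoid_scheme \<Rightarrow> real" where
  "Pr4 G = prob4 G (\<lambda>a1 a2 a3 a4.
     a1 \<otimes>\<^bsub>G\<^esub> a2 \<otimes>\<^bsub>G\<^esub> a3 \<otimes>\<^bsub>G\<^esub> a4 = a4 \<otimes>\<^bsub>G\<^esub> a3 \<otimes>\<^bsub>G\<^esub> a2 \<otimes>\<^bsub>G\<^esub> a1)"

definition stab_prod2 :: "('a, 'b) monoid_scheme \<Rightarrow> 'a \<Rightarrow> 'a \<Rightarrow> ('a \<times> 'a) set" where
  "stab_prod2 G g1 g2 = {(b1, b2). b1 \<in> carrier G \<and> b2 \<in> carrier G \<and>
     (inv\<^bsub>G\<^esub> b1 \<otimes>\<^bsub>G\<^esub> g1 \<otimes>\<^bsub>G\<^esub> b1) \<otimes>\<^bsub>G\<^esub> (inv\<^bsub>G\<^esub> b2 \<otimes>\<^bsub>G\<^esub> g2 \<otimes>\<^bsub>G\<^esub> b2)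
       = g1 \<otimes>\<^bsub>G\<^esub> g2}"

text \<open>Class multiplication coefficient c_{i,k;j}: number of (x1,x2) in Omega_i x Omega_k
  with x1 x2 = y for a fixed (chosen) y in Omega_j.\<close>
definition class_coeff :: "('a, 'b) monoid_scheme \<Rightarrow> 'a set \<Rightarrow> 'a set \<Rightarrow> 'a set \<Rightarrow> nat" where
  "class_coeff G A B C = card {(x1, x2). x1 \<in> A \<and> x2 \<in> B \<and>
     x1 \<otimes>\<^bsub>G\<^esub> x2 = (SOME y. y \<in> C)}"

end

theory Submission
  imports Defs
begin

text \<open>
  Put x = a1 a2 and y = a3 a4. Then a2 a1 and a4 a3 are the conjugates of x by a1 and of y
  by a3, so the quadruples with a1 a2 a3 a4 = a2 a1 a4 a3 correspond to the (x, y, b1, b2) with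
  (b1, b2) in Stab.Prod_2(x, y). The same substitution turns a1 a2 a3 a4 = a4 a3 a2 a1 into a
  reversed condition, which inversion and conjugation by x carry over to Stab.Prod_2(x^-1, y^-1).
  For x in Omega_i and y in Omega_k, (b1, b2) |-> (x^b1, y^b2) maps Stab.Prod_2(x, y) onto the
  factorisations of xy in Omega_i x Omega_k, each fibre having |C(x)| |C(y)| =
  |G|^2 / (|Omega_i| |Omega_k|) elements; summing over x and y counts pairs of factorisations of
  a common product, i.e. squares of the coefficients c_{i,k;j}. Finally c_{i,k;j} = c_{k,i;j}
  since (u, v) |-> (v, v^-1 u v) reverses the order of the factors.
\<close>

context group begin

lemma inv_mult_cancel_left [simp]: "x \<in> carrier G \<Longrightarrow> y \<in> carrier G \<Longrightarrow> inv x \<otimes> (x \<otimes> y) = y"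
  by (simp add: m_assoc[symmetric])

lemma mult_inv_cancel_left [simp]: "x \<in> carrier G \<Longrightarrow> y \<in> carrier G \<Longrightarrow> x \<otimes> (inv x \<otimes> y) = y"
  by (simp add: m_assoc[symmetric])

section \<open>Counting quadruples through Stab.Prod_2\<close>

lemma card_quadruples_by_partial_products:
  assumes fin: "finite (carrier G)"
  shows "card {(a1, a2, a3, a4). a1 \<in> carrier G \<and> a2 \<in> carrier G \<and> a3 \<in> carrier G \<and>
            a4 \<in> carrier G \<and> P (a1 \<otimes> a2) (a3 \<otimes> a4) a1 a3}
    = (\<Sum>x\<in>carrier G. \<Sum>y\<in>carrier G.
         card {(b1, b2). b1 \<in> carrier G \<and> b2 \<in> carrier G \<and> P x y b1 b2})"
proof -
  let ?S = "\<lambda>x y. {(b1, b2). b1 \<in> carrier G \<and> b2 \<in> carrier G \<and> P x y b1 b2}"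
  have fin_S: "finite (?S x y)" for x y
    by (rule finite_subset[of _ "carrier G \<times> carrier G"]) (auto simp: fin)
  have "card {(a1, a2, a3, a4). a1 \<in> carrier G \<and> a2 \<in> carrier G \<and> a3 \<in> carrier G \<and>
            a4 \<in> carrier G \<and> P (a1 \<otimes> a2) (a3 \<otimes> a4) a1 a3}
      = card (SIGMA x:carrier G. SIGMA y:carrier G. ?S x y)"
    by (rule bij_betw_same_card[of "\<lambda>(a1, a2, a3, a4). (a1 \<otimes> a2, a3 \<otimes> a4, a1, a3)"],
        rule bij_betw_byWitness[where f'="\<lambda>(x, y, b1, b2). (b1, inv b1 \<otimes> x, b2, inv b2 \<otimes> y)"])
       (auto simp: m_assoc[symmetric])
  also have "\<dots> = (\<Sum>x\<in>carrier G. \<Sum>y\<in>carrier G. card (?S x y))"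
    using fin fin_S by (simp add: finite_SigmaI)
  finally show ?thesis .
qed

lemma card_swapped_product_quadruples:
  assumes "finite (carrier G)"
  shows "card {(a1, a2, a3, a4). a1 \<in> carrier G \<and> a2 \<in> carrier G \<and> a3 \<in> carrier G \<and>
            a4 \<in> carrier G \<and> a1 \<otimes> a2 \<otimes> a3 \<otimes> a4 = a2 \<otimes> a1 \<otimes> a4 \<otimes> a3}
    = (\<Sum>x\<in>carrier G. \<Sum>y\<in>carrier G. card (stab_prod2 G x y))"
proof -
  have "a2 \<otimes> a1 \<otimes> a4 \<otimes> a3 = (inv a1 \<otimes> (a1 \<otimes> a2) \<otimes> a1) \<otimes> (inv a3 \<otimes> (a3 \<otimes> a4) \<otimes> a3)"
    if "a1 \<in> carrier G" "a2 \<in> carrier G" "a3 \<in> carrier G" "a4 \<in> carrier G" for a1 a2 a3 a4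
    using that by (simp add: m_assoc)
  then have "{(a1, a2, a3, a4). a1 \<in> carrier G \<and> a2 \<in> carrier G \<and> a3 \<in> carrier G \<and>
            a4 \<in> carrier G \<and> a1 \<otimes> a2 \<otimes> a3 \<otimes> a4 = a2 \<otimes> a1 \<otimes> a4 \<otimes> a3}
     = {(a1, a2, a3, a4). a1 \<in> carrier G \<and> a2 \<in> carrier G \<and> a3 \<in> carrier G \<and>
            a4 \<in> carrier G \<and> (a1, a3) \<in> stab_prod2 G (a1 \<otimes> a2) (a3 \<otimes> a4)}"
    by (auto simp: stab_prod2_def m_assoc)
  moreover have "{(b1, b2). b1 \<in> carrier G \<and> b2 \<in> carrier G \<and> (b1, b2) \<in> stab_prod2 G x y}
      = stab_prod2 G x y" for x y
    by (auto simp: stab_prod2_def)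
  ultimately show ?thesis
    using card_quadruples_by_partial_products[OF assms, where P = "\<lambda>x y b1 b2. (b1, b2) \<in> stab_prod2 G x y"]
    by simp
qed

text \<open>Inverting the reversed equation and conjugating by x gives the equation of
  Stab.Prod_2(x^-1, y^-1).\<close>
lemma stab_prod2_inv_iff:
  assumes [simp]: "x \<in> carrier G" "y \<in> carrier G" "b1 \<in> carrier G" "b2 \<in> carrier G"
  shows "(b1 \<otimes> x, b2 \<otimes> x) \<in> stab_prod2 G (inv x) (inv y)
     \<longleftrightarrow> x \<otimes> y = (inv b2 \<otimes> y \<otimes> b2) \<otimes> (inv b1 \<otimes> x \<otimes> b1)"
proof -
  let ?w = "(inv b2 \<otimes> y \<otimes> b2) \<otimes> (inv b1 \<otimes> x \<otimes> b1)"
  have "(inv (b1 \<otimes> x) \<otimes> inv x \<otimes> (b1 \<otimes> x)) \<otimes> (inv (b2 \<otimes> x) \<otimes> inv y \<otimes> (b2 \<otimes> x))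
      = inv x \<otimes> (inv ?w \<otimes> x)"
    by (simp add: m_assoc inv_mult_group)
  moreover have "inv x \<otimes> inv y = inv x \<otimes> (inv (x \<otimes> y) \<otimes> x)"
    by (simp add: m_assoc inv_mult_group)
  moreover have "inv ?w = inv (x \<otimes> y) \<longleftrightarrow> x \<otimes> y = ?w"
    using inv_inj by (auto simp: inj_on_def)
  ultimately show ?thesis
    by (simp add: stab_prod2_def)
qed

lemma card_stab_prod2_inv:
  assumes x: "x \<in> carrier G" and y: "y \<in> carrier G"
  shows "card (stab_prod2 G (inv x) (inv y))
    = card {(b1, b2). b1 \<in> carrier G \<and> b2 \<in> carrier G \<and>
              x \<otimes> y = (inv b2 \<otimes> y \<otimes> b2) \<otimes> (inv b1 \<otimes> x \<otimes> b1)}"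
proof (rule sym, rule bij_betw_same_card[of "\<lambda>(b1, b2). (b1 \<otimes> x, b2 \<otimes> x)"],
       rule bij_betw_byWitness[where f'="\<lambda>(c1, c2). (c1 \<otimes> inv x, c2 \<otimes> inv x)"])
  show "(\<lambda>(c1, c2). (c1 \<otimes> inv x, c2 \<otimes> inv x)) ` stab_prod2 G (inv x) (inv y)
    \<subseteq> {(b1, b2). b1 \<in> carrier G \<and> b2 \<in> carrier G \<and>
              x \<otimes> y = (inv b2 \<otimes> y \<otimes> b2) \<otimes> (inv b1 \<otimes> x \<otimes> b1)}"
  proof clarify
    fix c1 c2 assume c: "(c1, c2) \<in> stab_prod2 G (inv x) (inv y)"
    then have "c1 \<in> carrier G" "c2 \<in> carrier G" by (auto simp: stab_prod2_def)
    with c stab_prod2_inv_iff[OF x y, of "c1 \<otimes> inv x" "c2 \<otimes> inv x"] x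
    show "c1 \<otimes> inv x \<in> carrier G \<and> c2 \<otimes> inv x \<in> carrier G \<and>
      x \<otimes> y = inv (c2 \<otimes> inv x) \<otimes> y \<otimes> (c2 \<otimes> inv x) \<otimes> (inv (c1 \<otimes> inv x) \<otimes> x \<otimes> (c1 \<otimes> inv x))"
      by (simp add: m_assoc)
  qed
qed (use x y stab_prod2_inv_iff in \<open>auto simp: m_assoc stab_prod2_def\<close>)

lemma sum_carrier_reindex_inv: "(\<Sum>x\<in>carrier G. f (inv x)) = (\<Sum>x\<in>carrier G. f x)"
  by (rule sum.reindex_bij_betw, rule bij_betw_byWitness[where f' = "\<lambda>x. inv x"]) auto

lemma card_reversed_product_quadruples:
  assumes "finite (carrier G)"
  shows "card {(a1, a2, a3, a4). a1 \<in> carrier G \<and> a2 \<in> carrier G \<and> a3 \<in> carrier G \<and>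
            a4 \<in> carrier G \<and> a1 \<otimes> a2 \<otimes> a3 \<otimes> a4 = a4 \<otimes> a3 \<otimes> a2 \<otimes> a1}
    = (\<Sum>x\<in>carrier G. \<Sum>y\<in>carrier G. card (stab_prod2 G x y))"
proof -
  have "a4 \<otimes> a3 \<otimes> a2 \<otimes> a1 = (inv a3 \<otimes> (a3 \<otimes> a4) \<otimes> a3) \<otimes> (inv a1 \<otimes> (a1 \<otimes> a2) \<otimes> a1)"
    if "a1 \<in> carrier G" "a2 \<in> carrier G" "a3 \<in> carrier G" "a4 \<in> carrier G" for a1 a2 a3 a4
    using that by (simp add: m_assoc)
  then have "card {(a1, a2, a3, a4). a1 \<in> carrier G \<and> a2 \<in> carrier G \<and> a3 \<in> carrier G \<and>
            a4 \<in> carrier G \<and> a1 \<otimes> a2 \<otimes> a3 \<otimes> a4 = a4 \<otimes> a3 \<otimes> a2 \<otimes> a1}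
     = (\<Sum>x\<in>carrier G. \<Sum>y\<in>carrier G. card {(b1, b2). b1 \<in> carrier G \<and> b2 \<in> carrier G \<and>
              x \<otimes> y = (inv b2 \<otimes> y \<otimes> b2) \<otimes> (inv b1 \<otimes> x \<otimes> b1)})"
    using card_quadruples_by_partial_products[OF assms,
        where P = "\<lambda>x y b1 b2. x \<otimes> y = (inv b2 \<otimes> y \<otimes> b2) \<otimes> (inv b1 \<otimes> x \<otimes> b1)"]
    by (simp add: m_assoc cong: conj_cong)
  also have "\<dots> = (\<Sum>x\<in>carrier G. \<Sum>y\<in>carrier G. card (stab_prod2 G (inv x) (inv y)))"
    by (simp add: card_stab_prod2_inv)
  also have "\<dots> = (\<Sum>x\<in>carrier G. \<Sum>y\<in>carrier G. card (stab_prod2 G (inv x) y))"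
    by (rule sum.cong[OF refl], rule sum_carrier_reindex_inv)
  also have "\<dots> = (\<Sum>x\<in>carrier G. \<Sum>y\<in>carrier G. card (stab_prod2 G x y))"
    by (rule sum_carrier_reindex_inv[where f = "\<lambda>x. \<Sum>y\<in>carrier G. card (stab_prod2 G x y)"])
  finally show ?thesis .
qed

section \<open>Conjugacy classes and centralizers\<close>

definition centralizer :: "'a \<Rightarrow> 'a set" where
  "centralizer x = {g \<in> carrier G. inv g \<otimes> x \<otimes> g = x}"

lemma conj_in_conj_class: "x \<in> carrier G \<Longrightarrow> g \<in> carrier G \<Longrightarrow> inv g \<otimes> x \<otimes> g \<in> conj_class G x"
  unfolding conj_class_def by blast

lemma conj_class_subset_carrier: "x \<in> carrier G \<Longrightarrow> conj_class G x \<subseteq> carrier G"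
  by (auto simp: conj_class_def)

lemma self_in_conj_class: "x \<in> carrier G \<Longrightarrow> x \<in> conj_class G x"
  using conj_in_conj_class[of x \<one>] by simp

lemma conj_class_subset:
  assumes x: "x \<in> carrier G" and y: "y \<in> conj_class G x"
  shows "conj_class G y \<subseteq> conj_class G x"
proof
  fix z assume "z \<in> conj_class G y"
  then obtain h where h: "h \<in> carrier G" "z = inv h \<otimes> y \<otimes> h" by (auto simp: conj_class_def)
  obtain g where g: "g \<in> carrier G" "y = inv g \<otimes> x \<otimes> g" using y by (auto simp: conj_class_def)
  have "z = inv (g \<otimes> h) \<otimes> x \<otimes> (g \<otimes> h)" using g h x by (simp add: m_assoc inv_mult_group)
  then show "z \<in> conj_class G x" using g h x conj_in_conj_class by simp
qed

lemma conj_class_eq: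
  assumes x: "x \<in> carrier G" and y: "y \<in> conj_class G x"
  shows "conj_class G y = conj_class G x"
proof
  obtain g where g: "g \<in> carrier G" "y = inv g \<otimes> x \<otimes> g" using y by (auto simp: conj_class_def)
  then have y_carrier: "y \<in> carrier G" using x by simp
  have "x = inv (inv g) \<otimes> y \<otimes> inv g" using g x by (simp add: m_assoc)
  also have "\<dots> \<in> conj_class G y" using g y_carrier by (intro conj_in_conj_class) simp_all
  finally show "conj_class G x \<subseteq> conj_class G y" by (rule conj_class_subset[OF y_carrier])
qed (rule conj_class_subset[OF assms])

lemma conj_classes_subset_carrier: "A \<in> conj_classes G \<Longrightarrow> A \<subseteq> carrier G"
  unfolding conj_classes_def using conj_class_subset_carrier by blast

lemma conj_class_of_mem:
  assumes "A \<in> conj_classes G" "a \<in> A"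
  shows "conj_class G a = A"
  using assms conj_class_eq unfolding conj_classes_def by blast

lemma conj_classes_conj_closed:
  assumes "A \<in> conj_classes G" "a \<in> A" "g \<in> carrier G"
  shows "inv g \<otimes> a \<otimes> g \<in> A"
  using assms conj_in_conj_class conj_class_of_mem conj_classes_subset_carrier by blast

lemma conj_classes_nonempty: "A \<in> conj_classes G \<Longrightarrow> A \<noteq> {}"
  unfolding conj_classes_def using self_in_conj_class by blast

lemma sum_over_conj_classes:
  assumes "finite (carrier G)"
  shows "(\<Sum>x\<in>carrier G. f x) = (\<Sum>A\<in>conj_classes G. \<Sum>x\<in>A. f x)"
proof -
  have "{x \<in> carrier G. conj_class G x = A} = A" if "A \<in> conj_classes G" for A
    using that conj_class_of_mem conj_classes_subset_carrier self_in_conj_class by blast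
  then show ?thesis
    using sum.group[OF assms _ _, of "conj_classes G" "conj_class G" f] assms
    by (simp add: conj_classes_def)
qed

lemma conj_mult:
  "\<lbrakk>a \<in> carrier G; b \<in> carrier G; x \<in> carrier G\<rbrakk>
    \<Longrightarrow> inv (a \<otimes> b) \<otimes> x \<otimes> (a \<otimes> b) = inv b \<otimes> (inv a \<otimes> x \<otimes> a) \<otimes> b"
  by (simp add: m_assoc inv_mult_group)

lemma card_conjugators:
  assumes x: "x \<in> carrier G" and y: "y \<in> conj_class G x"
  shows "card {b \<in> carrier G. inv b \<otimes> x \<otimes> b = y} = card (centralizer x)"
proof -
  obtain g where g: "g \<in> carrier G" and y_def: "y = inv g \<otimes> x \<otimes> g"
    using y by (auto simp: conj_class_def)
  have "bij_betw (\<lambda>c. c \<otimes> g) (centralizer x) {b \<in> carrier G. inv b \<otimes> x \<otimes> b = y}"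
  proof (rule bij_betw_byWitness[where f' = "\<lambda>b. b \<otimes> inv g"])
    show "(\<lambda>c. c \<otimes> g) ` centralizer x \<subseteq> {b \<in> carrier G. inv b \<otimes> x \<otimes> b = y}"
      using g x by (auto simp: centralizer_def conj_mult y_def)
    have "inv (b \<otimes> inv g) \<otimes> x \<otimes> (b \<otimes> inv g) = x"
      if b: "b \<in> carrier G" and b_conj: "inv b \<otimes> x \<otimes> b = y" for b
    proof -
      have "inv (b \<otimes> inv g) \<otimes> x \<otimes> (b \<otimes> inv g) = g \<otimes> y \<otimes> inv g"
        using b g x by (simp add: conj_mult b_conj)
      also have "\<dots> = x" using g x by (simp add: y_def m_assoc)
      finally show ?thesis .
    qed
    then show "(\<lambda>b. b \<otimes> inv g) ` {b \<in> carrier G. inv b \<otimes> x \<otimes> b = y} \<subseteq> centralizer x"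
      using g by (auto simp: centralizer_def)
  qed (use g in \<open>auto simp: centralizer_def m_assoc\<close>)
  then show ?thesis by (rule bij_betw_same_card[symmetric])
qed

lemma card_conj_class_mult_centralizer:
  assumes fin: "finite (carrier G)" and x: "x \<in> carrier G"
  shows "card (conj_class G x) * card (centralizer x) = card (carrier G)"
proof -
  have "card (carrier G) = (\<Sum>y\<in>conj_class G x. card {b \<in> carrier G. inv b \<otimes> x \<otimes> b = y})"
  proof -
    have "(\<lambda>b. inv b \<otimes> x \<otimes> b) ` carrier G \<subseteq> conj_class G x"
      using conj_in_conj_class[OF x] by blast
    from sum.group[OF fin finite_subset[OF conj_class_subset_carrier[OF x] fin] this, of "\<lambda>_. 1::nat"]
    show ?thesis by simp
  qed
  also have "\<dots> = card (conj_class G x) * card (centralizer x)"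
    using card_conjugators[OF x] by simp
  finally show ?thesis by simp
qed

section \<open>Class multiplication coefficients\<close>

definition factor_count :: "'a set \<Rightarrow> 'a set \<Rightarrow> 'a \<Rightarrow> nat" where
  "factor_count A B z = card {(a, b). a \<in> A \<and> b \<in> B \<and> a \<otimes> b = z}"

lemma card_stab_prod2:
  assumes fin: "finite (carrier G)" and x: "x \<in> carrier G" and y: "y \<in> carrier G"
  shows "card (stab_prod2 G x y)
    = factor_count (conj_class G x) (conj_class G y) (x \<otimes> y) * card (centralizer x) * card (centralizer y)"
proof -
  let ?S = "stab_prod2 G x y"
  let ?T = "{(a, b). a \<in> conj_class G x \<and> b \<in> conj_class G y \<and> a \<otimes> b = x \<otimes> y}"
  let ?f = "\<lambda>(b1, b2). (inv b1 \<otimes> x \<otimes> b1, inv b2 \<otimes> y \<otimes> b2)"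
  have fin_S: "finite ?S"
    by (rule finite_subset[of _ "carrier G \<times> carrier G"]) (auto simp: stab_prod2_def fin)
  have fin_T: "finite ?T"
    by (rule finite_subset[of _ "carrier G \<times> carrier G"]) (use conj_class_subset_carrier x y fin in auto)
  have "?f ` ?S \<subseteq> ?T" using conj_in_conj_class x y by (auto simp: stab_prod2_def)
  then have "card ?S = (\<Sum>p\<in>?T. card {s \<in> ?S. ?f s = p})"
    using sum.group[OF fin_S fin_T, of ?f "\<lambda>_. 1::nat"] by simp
  also have "\<dots> = (\<Sum>p\<in>?T. card (centralizer x) * card (centralizer y))"
  proof (rule sum.cong[OF refl])
    fix p assume p: "p \<in> ?T"
    then have "{s \<in> ?S. ?f s = p}
        = {b \<in> carrier G. inv b \<otimes> x \<otimes> b = fst p} \<times> {b \<in> carrier G. inv b \<otimes> y \<otimes> b = snd p}"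
      by (auto simp: stab_prod2_def)
    with p show "card {s \<in> ?S. ?f s = p} = card (centralizer x) * card (centralizer y)"
      using card_conjugators x y by (auto simp: card_cartesian_product)
  qed
  finally show ?thesis by (simp add: factor_count_def)
qed

lemma factor_count_conj:
  assumes A: "A \<in> conj_classes G" and B: "B \<in> conj_classes G"
    and z: "z \<in> carrier G" and g: "g \<in> carrier G"
  shows "factor_count A B (inv g \<otimes> z \<otimes> g) = factor_count A B z"
proof -
  let ?F = "\<lambda>w. {(a, b). a \<in> A \<and> b \<in> B \<and> a \<otimes> b = w}"
  have carrier: "a \<in> carrier G" "b \<in> carrier G" if "(a, b) \<in> ?F w" for a b w
    using that conj_classes_subset_carrier A B by auto
  have maps: "(\<lambda>(a, b). (inv h \<otimes> a \<otimes> h, inv h \<otimes> b \<otimes> h)) ` ?F w \<subseteq> ?F (inv h \<otimes> w \<otimes> h)"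
    if "h \<in> carrier G" for h w
    using that carrier conj_classes_conj_closed[OF A] conj_classes_conj_closed[OF B]
    by (fastforce simp: m_assoc)
  have "bij_betw (\<lambda>(a, b). (inv g \<otimes> a \<otimes> g, inv g \<otimes> b \<otimes> g)) (?F z) (?F (inv g \<otimes> z \<otimes> g))"
  proof (rule bij_betw_byWitness[where f' = "\<lambda>(a, b). (inv (inv g) \<otimes> a \<otimes> inv g, inv (inv g) \<otimes> b \<otimes> inv g)"])
    show "(\<lambda>(a, b). (inv (inv g) \<otimes> a \<otimes> inv g, inv (inv g) \<otimes> b \<otimes> inv g)) ` ?F (inv g \<otimes> z \<otimes> g) \<subseteq> ?F z"
      using maps[of "inv g" "inv g \<otimes> z \<otimes> g"] g z by (simp add: m_assoc)
  qed (use g carrier maps in \<open>auto simp: m_assoc\<close>)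
  then show ?thesis
    unfolding factor_count_def by (rule bij_betw_same_card[symmetric])
qed

lemma class_coeff_eq_factor_count:
  assumes A: "A \<in> conj_classes G" and B: "B \<in> conj_classes G"
    and C: "C \<in> conj_classes G" and z: "z \<in> C"
  shows "class_coeff G A B C = factor_count A B z"
proof -
  let ?y = "SOME y. y \<in> C"
  have y: "?y \<in> C" using conj_classes_nonempty[OF C] by (simp add: some_in_eq)
  then have "z \<in> conj_class G ?y" using conj_class_of_mem[OF C] z by simp
  then obtain g where g: "g \<in> carrier G" and z_def: "z = inv g \<otimes> ?y \<otimes> g"
    by (auto simp: conj_class_def)
  have "factor_count A B z = factor_count A B ?y"
    unfolding z_def using factor_count_conj[OF A B _ g] y conj_classes_subset_carrier[OF C] by blast
  then show ?thesis by (simp add: class_coeff_def factor_count_def)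
qed

lemma factor_count_commute:
  assumes A: "A \<in> conj_classes G" and B: "B \<subseteq> carrier G"
  shows "factor_count A B z = factor_count B A z"
proof -
  have "bij_betw (\<lambda>(a, b). (b, inv b \<otimes> a \<otimes> b))
      {(a, b). a \<in> A \<and> b \<in> B \<and> a \<otimes> b = z} {(b, a). b \<in> B \<and> a \<in> A \<and> b \<otimes> a = z}"
    by (rule bij_betw_byWitness[where f' = "\<lambda>(b, a). (inv (inv b) \<otimes> a \<otimes> inv b, b)"])
       (use B conj_classes_subset_carrier[OF A] conj_classes_conj_closed[OF A]
          conj_classes_conj_closed[OF A _ inv_closed] in \<open>auto simp: m_assoc subset_eq\<close>)
  then show ?thesis
    unfolding factor_count_def by (rule bij_betw_same_card)
qed

lemma class_coeff_commute:
  assumes "A \<in> conj_classes G" and "B \<in> conj_classes G"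
  shows "class_coeff G A B C = class_coeff G B A C"
  using factor_count_commute[OF assms(1) conj_classes_subset_carrier[OF assms(2)]]
  by (simp add: class_coeff_def factor_count_def)

lemma sum_factor_count_products:
  assumes fin: "finite (carrier G)" and A: "A \<subseteq> carrier G" and B: "B \<subseteq> carrier G"
  shows "(\<Sum>a\<in>A. \<Sum>b\<in>B. factor_count A B (a \<otimes> b)) = (\<Sum>z\<in>carrier G. factor_count A B z ^ 2)"
proof -
  let ?m = "\<lambda>(a, b). a \<otimes> b"
  have fin_AB: "finite (A \<times> B)" using A B fin finite_subset by blast
  have "?m ` (A \<times> B) \<subseteq> carrier G" using A B by auto
  have fiber: "{p \<in> A \<times> B. ?m p = z} = {(a, b). a \<in> A \<and> b \<in> B \<and> a \<otimes> b = z}" for z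
    by auto
  have "(\<Sum>a\<in>A. \<Sum>b\<in>B. factor_count A B (a \<otimes> b)) = (\<Sum>p\<in>A \<times> B. factor_count A B (?m p))"
    by (simp add: sum.cartesian_product case_prod_beta')
  also have "\<dots> = (\<Sum>z\<in>carrier G. \<Sum>p\<in>{p \<in> A \<times> B. ?m p = z}. factor_count A B (?m p))"
    by (rule sum.group[OF fin_AB fin \<open>?m ` (A \<times> B) \<subseteq> carrier G\<close>, symmetric])
  also have "\<dots> = (\<Sum>z\<in>carrier G. \<Sum>p\<in>{p \<in> A \<times> B. ?m p = z}. factor_count A B z)"
    by (intro sum.cong refl) auto
  also have "\<dots> = (\<Sum>z\<in>carrier G. factor_count A B z ^ 2)"
    by (simp add: fiber factor_count_def power2_eq_square)
  finally show ?thesis .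
qed

lemma sum_factor_count_sq:
  assumes fin: "finite (carrier G)" and A: "A \<in> conj_classes G" and B: "B \<in> conj_classes G"
  shows "(\<Sum>z\<in>carrier G. factor_count A B z ^ 2)
    = (\<Sum>C\<in>conj_classes G. card C * class_coeff G A B C ^ 2)"
proof -
  have "(\<Sum>z\<in>C. factor_count A B z ^ 2) = card C * class_coeff G A B C ^ 2"
    if "C \<in> conj_classes G" for C
    by (simp add: class_coeff_eq_factor_count[OF A B that, symmetric] cong: sum.cong)
  then show ?thesis by (simp add: sum_over_conj_classes[OF fin])
qed

lemma card_centralizer_real:
  assumes fin: "finite (carrier G)" and A: "A \<in> conj_classes G" and x: "x \<in> A"
  shows "real (card (centralizer x)) = real (card (carrier G)) / real (card A)"
proof -
  have "card A * card (centralizer x) = card (carrier G)"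
    using card_conj_class_mult_centralizer[OF fin] conj_class_of_mem[OF A x]
          conj_classes_subset_carrier[OF A] x by auto
  moreover have "card A > 0"
    using conj_classes_nonempty[OF A] finite_subset[OF conj_classes_subset_carrier[OF A] fin]
    by (simp add: card_gt_0_iff)
  ultimately show ?thesis by (simp add: field_simps flip: of_nat_mult)
qed

lemma sum_card_stab_prod2_classes:
  assumes fin: "finite (carrier G)" and A: "A \<in> conj_classes G" and B: "B \<in> conj_classes G"
  shows "(\<Sum>x\<in>A. \<Sum>y\<in>B. real (card (stab_prod2 G x y)))
    = real (card (carrier G)) ^ 2 / (real (card A) * real (card B))
      * (\<Sum>C\<in>conj_classes G. real (card C) * real (class_coeff G A B C) ^ 2)"
proof -
  let ?n = "real (card (carrier G))"
  have "real (card (stab_prod2 G x y))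
      = ?n ^ 2 / (real (card A) * real (card B)) * real (factor_count A B (x \<otimes> y))"
    if x: "x \<in> A" and y: "y \<in> B" for x y
  proof -
    have "x \<in> carrier G" "y \<in> carrier G"
      using x y conj_classes_subset_carrier[OF A] conj_classes_subset_carrier[OF B] by auto
    then have "card (stab_prod2 G x y)
        = factor_count A B (x \<otimes> y) * card (centralizer x) * card (centralizer y)"
      using card_stab_prod2[OF fin] conj_class_of_mem[OF A x] conj_class_of_mem[OF B y] by simp
    then show ?thesis
      by (simp add: card_centralizer_real[OF fin A x] card_centralizer_real[OF fin B y] power2_eq_square)
  qed
  then have "(\<Sum>x\<in>A. \<Sum>y\<in>B. real (card (stab_prod2 G x y)))
      = ?n ^ 2 / (real (card A) * real (card B)) * real (\<Sum>x\<in>A. \<Sum>y\<in>B. factor_count A B (x \<otimes> y))"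
    by (simp add: sum_distrib_left)
  also have "\<dots> = ?n ^ 2 / (real (card A) * real (card B))
      * (\<Sum>C\<in>conj_classes G. real (card C) * real (class_coeff G A B C) ^ 2)"
    by (simp add: sum_factor_count_products[OF fin conj_classes_subset_carrier[OF A]
          conj_classes_subset_carrier[OF B]] sum_factor_count_sq[OF fin A B])
  finally show ?thesis .
qed

lemma sum_card_stab_prod2:
  assumes fin: "finite (carrier G)"
  shows "(\<Sum>x\<in>carrier G. \<Sum>y\<in>carrier G. real (card (stab_prod2 G x y))) / real (card (carrier G)) ^ 4
    = (\<Sum>A\<in>conj_classes G. \<Sum>B\<in>conj_classes G. \<Sum>C\<in>conj_classes G.
         real (card C) * real (class_coeff G A B C) ^ 2
         / (real (card A) * real (card B) * real (card (carrier G)) ^ 2))"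
proof -
  let ?n = "real (card (carrier G))"
  have "?n > 0" using fin by (auto simp: card_gt_0_iff)
  have "(\<Sum>x\<in>carrier G. \<Sum>y\<in>carrier G. real (card (stab_prod2 G x y)))
      = (\<Sum>A\<in>conj_classes G. \<Sum>B\<in>conj_classes G. \<Sum>x\<in>A. \<Sum>y\<in>B. real (card (stab_prod2 G x y)))"
    by (simp add: sum_over_conj_classes[OF fin] sum_distrib_left sum.swap[of _ _ "conj_classes G"])
  also have "\<dots> = (\<Sum>A\<in>conj_classes G. \<Sum>B\<in>conj_classes G.
      ?n ^ 2 / (real (card A) * real (card B))
      * (\<Sum>C\<in>conj_classes G. real (card C) * real (class_coeff G A B C) ^ 2))"
    by (simp add: sum_card_stab_prod2_classes[OF fin])
  finally show ?thesis
    using \<open>?n > 0\<close> by (simp add: sum_divide_distrib sum_distrib_left field_simps power_numeral_reduce)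
qed

lemma prob4_swapped_products:
  assumes "finite (carrier G)"
  shows "prob4 G (\<lambda>a1 a2 a3 a4. a1 \<otimes> a2 \<otimes> a3 \<otimes> a4 = a2 \<otimes> a1 \<otimes> a4 \<otimes> a3)
    = (\<Sum>x\<in>carrier G. \<Sum>y\<in>carrier G. real (card (stab_prod2 G x y))) / real (card (carrier G)) ^ 4"
  unfolding prob4_def card_swapped_product_quadruples[OF assms] by simp

lemma prob4_reversed_products:
  assumes "finite (carrier G)"
  shows "prob4 G (\<lambda>a1 a2 a3 a4. a1 \<otimes> a2 \<otimes> a3 \<otimes> a4 = a4 \<otimes> a3 \<otimes> a2 \<otimes> a1)
    = (\<Sum>x\<in>carrier G. \<Sum>y\<in>carrier G. real (card (stab_prod2 G x y))) / real (card (carrier G)) ^ 4"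
  unfolding prob4_def card_reversed_product_quadruples[OF assms] by simp

end


theorem mainTheorem7:
  fixes G :: "('a, 'b) monoid_scheme"
  assumes "group G" and "finite (carrier G)"
  shows
   "prob4 G (\<lambda>a1 a2 a3 a4. a1 \<otimes>\<^bsub>G\<^esub> a2 \<otimes>\<^bsub>G\<^esub> a3 \<otimes>\<^bsub>G\<^esub> a4
                          = a2 \<otimes>\<^bsub>G\<^esub> a1 \<otimes>\<^bsub>G\<^esub> a4 \<otimes>\<^bsub>G\<^esub> a3)
      = prob4 G (\<lambda>a1 a2 a3 a4. a1 \<otimes>\<^bsub>G\<^esub> a2 \<otimes>\<^bsub>G\<^esub> a3 \<otimes>\<^bsub>G\<^esub> a4
                          = a4 \<otimes>\<^bsub>G\<^esub> a3 \<otimes>\<^bsub>G\<^esub> a2 \<otimes>\<^bsub>G\<^esub> a1)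
    \<and> prob4 G (\<lambda>a1 a2 a3 a4. a1 \<otimes>\<^bsub>G\<^esub> a2 \<otimes>\<^bsub>G\<^esub> a3 \<otimes>\<^bsub>G\<^esub> a4
                          = a4 \<otimes>\<^bsub>G\<^esub> a3 \<otimes>\<^bsub>G\<^esub> a2 \<otimes>\<^bsub>G\<^esub> a1) = Pr4 G
    \<and> Pr4 G = (\<Sum>x\<in>carrier G. \<Sum>y\<in>carrier G. real (card (stab_prod2 G x y)))
                / real (card (carrier G)) ^ 4
    \<and> (\<Sum>x\<in>carrier G. \<Sum>y\<in>carrier G. real (card (stab_prod2 G x y)))
                / real (card (carrier G)) ^ 4
      = (\<Sum>A\<in>conj_classes G. \<Sum>B\<in>conj_classes G. \<Sum>C\<in>conj_classes G.
           real (card C) * real (class_coeff G A B C) ^ 2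
           / (real (card A) * real (card B) * real (card (carrier G)) ^ 2))
    \<and> (\<Sum>A\<in>conj_classes G. \<Sum>B\<in>conj_classes G. \<Sum>C\<in>conj_classes G.
           real (card C) * real (class_coeff G A B C) ^ 2
           / (real (card A) * real (card B) * real (card (carrier G)) ^ 2))
      = (\<Sum>A\<in>conj_classes G. \<Sum>B\<in>conj_classes G. \<Sum>C\<in>conj_classes G.
           real (card C) * real (class_coeff G A B C) * real (class_coeff G B A C)
           / (real (card A) * real (card B) * real (card (carrier G)) ^ 2))"
proof -
  interpret group G by (fact assms(1))
  have "real (class_coeff G A B C) ^ 2 = real (class_coeff G A B C) * real (class_coeff G B A C)"
    if "A \<in> conj_classes G" "B \<in> conj_classes G" for A B C
    using class_coeff_commute[OF that] by (simp add: power2_eq_square)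
  then show ?thesis
    using prob4_swapped_products[OF assms(2)] prob4_reversed_products[OF assms(2)]
      sum_card_stab_prod2[OF assms(2)]
    by (simp add: Pr4_def mult.assoc cong: sum.cong)
qed

end
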